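(* Let $p>1$ and let $\varphi$ be an analytic self-map of $\mathbb{D}$ with $\varphi\in S^p$. Then $D_\varphi:S^p\to S^p$ is bounded if and only if $\|\varphi\|_\infty=\sup_{z\in\mathbb{D}}|\varphi(z)|<1$.
   Context: $\mathbb{D}$ is the open unit disk. For $p>1$, $H^p$ is the Hardy space on $\mathbb{D}$ with norm $\|g\|_{H^p}^p=\sup_{0<r<1}\int_0^{2\pi}|g(re^{i\theta})|^p\frac{d\theta}{2\pi}$; $S^p$ is the space of analytic $f$ on $\mathbb{D}$ with $f'\in H^p$, normed by $\|f\|_{S^p}=|f(0)|+\|f'\|_{H^p}$. The composition-differentiation operator is $D_\varphi f=f'\circ\varphi$. *)

theory Defs
  imports "HOL-Complex_Analysis.Complex_Analysis"
begin

definition hardy_mean :: "real \<Rightarrow> (complex \<Rightarrow> complex) \<Rightarrow> real \<Rightarrow> real" where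
  "hardy_mean p g r =
     integral {0..2*pi} (\<lambda>t. norm (g (complex_of_real r * cis t)) powr p) / (2*pi)"

definition in_Hardy :: "real \<Rightarrow> (complex \<Rightarrow> complex) \<Rightarrow> bool" where
  "in_Hardy p g \<longleftrightarrow> g holomorphic_on ball 0 1 \<and> bdd_above (hardy_mean p g ` {0<..<1})"

definition Hardy_norm :: "real \<Rightarrow> (complex \<Rightarrow> complex) \<Rightarrow> real" where
  "Hardy_norm p g = (SUP r\<in>{0<..<1}. hardy_mean p g r) powr (1/p)"

definition in_Sp :: "real \<Rightarrow> (complex \<Rightarrow> complex) \<Rightarrow> bool" where
  "in_Sp p f \<longleftrightarrow> f holomorphic_on ball 0 1 \<and> in_Hardy p (deriv f)"

definition Sp_norm :: "real \<Rightarrow> (complex \<Rightarrow> complex) \<Rightarrow> real" where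
  "Sp_norm p f = norm (f 0) + Hardy_norm p (deriv f)"

definition comp_diff :: "(complex \<Rightarrow> complex) \<Rightarrow> (complex \<Rightarrow> complex) \<Rightarrow> (complex \<Rightarrow> complex)" where
  "comp_diff \<phi> f = deriv f \<circ> \<phi>"

definition comp_diff_bounded_Sp :: "real \<Rightarrow> (complex \<Rightarrow> complex) \<Rightarrow> bool" where
  "comp_diff_bounded_Sp p \<phi> \<longleftrightarrow>
     (\<forall>f. in_Sp p f \<longrightarrow> in_Sp p (comp_diff \<phi> f)) \<and>
     (\<exists>C. \<forall>f. in_Sp p f \<longrightarrow> Sp_norm p (comp_diff \<phi> f) \<le> C * Sp_norm p f)"

end

theory Submission
  imports Defs
begin

text \<open>
  Sufficiency: a function h in H^p obeys |h(z)| <= C (1 - |z|)^(-1/p) ||h||, by writing h(z) as a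
  Poisson integral over a slightly larger circle and splitting the integrand with Young's
  inequality; Cauchy's estimate then bounds h' on every smaller disc. If |\<phi>| <= s < 1, the
  derivative (D_\<phi> f)' = (f'' o \<phi>) \<phi>' is therefore dominated by a constant times ||f'||_{H^p} |\<phi>'|.

  Necessity: for p > 1 the growth bound on f' is integrable along radii, so point evaluations are
  bounded on S^p. The primitive f_w of (1 - conj w \<zeta>)^(-2/p) has S^p norm at most
  (1 - |w|^2)^(-1/p) but |f_w'(w)| = (1 - |w|^2)^(-2/p); evaluating D_\<phi> f_w at z with
  w = \<phi> z bounds (1 - |\<phi> z|^2)^(-1/p) independently of z, hence sup |\<phi>| < 1.
\<close>

section \<open>The Poisson kernel\<close>

definition poisson_kernel :: "real \<Rightarrow> complex \<Rightarrow> real \<Rightarrow> real" where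
  "poisson_kernel \<rho> z t = (\<rho>\<^sup>2 - (norm z)\<^sup>2) / (norm (of_real \<rho> * cis t - z))\<^sup>2"

lemma norm_sub_circle_ge: "0 \<le> \<rho> \<Longrightarrow> \<rho> - norm z \<le> norm (of_real \<rho> * cis t - z)"
  by (metis norm_triangle_ineq2 norm_of_real norm_cis mult_1_right norm_mult abs_of_nonneg)

lemma poisson_kernel_nonneg: "norm z \<le> \<rho> \<Longrightarrow> 0 \<le> poisson_kernel \<rho> z t"
  unfolding poisson_kernel_def by (intro divide_nonneg_nonneg) (auto intro!: power_mono)

lemma poisson_kernel_le:
  assumes "norm z < \<rho>"
  shows "poisson_kernel \<rho> z t \<le> (\<rho> + norm z) / (\<rho> - norm z)"
proof -
  define d where "d = norm (of_real \<rho> * cis t - z)"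
  have "0 \<le> norm z"
    by simp
  then have d: "\<rho> - norm z \<le> d" "0 < \<rho> - norm z" "0 \<le> \<rho> + norm z"
    using norm_sub_circle_ge[of \<rho> z t] assms unfolding d_def by linarith+
  have "poisson_kernel \<rho> z t = (\<rho> - norm z) * (\<rho> + norm z) / d\<^sup>2"
    by (simp add: poisson_kernel_def d_def power2_eq_square algebra_simps)
  also have "\<dots> \<le> (\<rho> - norm z) * (\<rho> + norm z) / (\<rho> - norm z)\<^sup>2"
    using d by (intro divide_left_mono mult_nonneg_nonneg power_mono mult_pos_pos) auto
  also have "\<dots> = (\<rho> + norm z) / (\<rho> - norm z)"
    using d by (simp add: power2_eq_square)
  finally show ?thesis .
qed

lemma poisson_kernel_midpoint_le:
  assumes "norm z < 1"
  shows "poisson_kernel ((1 + norm z) / 2) z t \<le> 4 / (1 - norm z)"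
proof -
  have "poisson_kernel ((1 + norm z) / 2) z t \<le> ((1 + norm z) / 2 + norm z) / ((1 + norm z) / 2 - norm z)"
    using assms by (intro poisson_kernel_le) simp
  also have "\<dots> = (1 + 3 * norm z) / (1 - norm z)"
    using assms by (simp add: field_simps)
  also have "\<dots> \<le> 4 / (1 - norm z)"
    using assms by (intro divide_right_mono) auto
  finally show ?thesis .
qed

lemma continuous_on_poisson_kernel:
  assumes "norm z < \<rho>"
  shows "continuous_on A (poisson_kernel \<rho> z)"
proof -
  have "(norm (of_real \<rho> * cis t - z))\<^sup>2 \<noteq> 0" for t
    using norm_sub_circle_ge[of \<rho> z t] norm_ge_zero[of z] assms by auto
  then show ?thesis
    unfolding poisson_kernel_def by (intro continuous_intros) auto
qed

lemma poisson_kernel_cauchy_eq: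
  assumes "norm u = \<rho>" and "norm z < \<rho>"
  shows "u * of_real (\<rho>\<^sup>2 - (norm z)\<^sup>2) / ((u - z) * (of_real (\<rho>\<^sup>2) - cnj z * u))
           = of_real ((\<rho>\<^sup>2 - (norm z)\<^sup>2) / (norm (u - z))\<^sup>2)"
proof -
  have u0: "u \<noteq> 0" and uz: "u - z \<noteq> 0"
    using assms by auto
  have "of_real (\<rho>\<^sup>2) = u * cnj u"
    using assms(1) complex_norm_square[of u] by simp
  then have "of_real (\<rho>\<^sup>2) - cnj z * u = u * cnj (u - z)"
    by (simp add: algebra_simps)
  moreover have "of_real ((norm (u - z))\<^sup>2) = (u - z) * cnj (u - z)"
    by (rule complex_norm_square)
  moreover have "u * c / ((u - z) * (u * w)) = c / ((u - z) * w)" for c w :: complex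
    using u0 by simp
  ultimately show ?thesis
    by simp
qed

text \<open>Cauchy's formula applied to \<open>F u = h u (\<rho>\<^sup>2 - |z|\<^sup>2) / (\<rho>\<^sup>2 - cnj z * u)\<close>, which agrees with \<open>h\<close>
  at \<open>z\<close>; on the circle, \<open>F u / (u - z)\<close> times \<open>du / i\<close> is \<open>h u\<close> times the Poisson kernel.\<close>
lemma poisson_integral_formula:
  fixes h :: "complex \<Rightarrow> complex"
  assumes holh: "h holomorphic_on ball 0 R" and "0 < \<rho>" "\<rho> < R" and z: "norm z < \<rho>"
  shows "((\<lambda>t. h (of_real \<rho> * cis t) * of_real (poisson_kernel \<rho> z t)) has_integral (2 * pi * h z))
           {0..2*pi}"
proof -
  define F where "F u = h u * of_real (\<rho>\<^sup>2 - (norm z)\<^sup>2) / (of_real (\<rho>\<^sup>2) - cnj z * u)" for u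
  have nz: "of_real (\<rho>\<^sup>2) - cnj z * u \<noteq> 0" if "norm u \<le> \<rho>" for u
  proof -
    have "norm (cnj z * u) \<le> norm z * \<rho>"
      using that by (simp add: norm_mult mult_left_mono)
    also have "\<dots> < \<rho>\<^sup>2"
      using z \<open>0 < \<rho>\<close> by (simp add: power2_eq_square)
    finally show ?thesis
      by (metis less_irrefl norm_of_real abs_of_nonneg zero_le_power2 eq_iff_diff_eq_0)
  qed
  have sub: "cball 0 \<rho> \<subseteq> ball 0 R"
    using \<open>\<rho> < R\<close> by auto
  have "continuous_on (cball 0 \<rho>) F"
    unfolding F_def
    by (intro continuous_intros holomorphic_on_imp_continuous_on[OF holomorphic_on_subset[OF holh sub]])
       (use nz in auto)
  moreover have "F holomorphic_on ball 0 \<rho>"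
    unfolding F_def by (intro holomorphic_intros holomorphic_on_subset[OF holh]) (use sub nz in auto)
  ultimately have "((\<lambda>u. F u / (u - z)) has_contour_integral (2 * of_real pi * \<i> * F z)) (circlepath 0 \<rho>)"
    by (rule Cauchy_integral_circlepath) (use z in simp)
  then have "((\<lambda>t. F (of_real \<rho> * cis t) / (of_real \<rho> * cis t - z) * of_real \<rho> * \<i> * cis t)
               has_integral 2 * of_real pi * \<i> * F z) {0..2*pi}"
    unfolding circlepath_def by (subst (asm) has_contour_integral_part_circlepath_iff) auto
  from has_integral_mult_left[OF this, of "-\<i>"]
  have "((\<lambda>t. F (of_real \<rho> * cis t) / (of_real \<rho> * cis t - z) * of_real \<rho> * \<i> * cis t * (-\<i>))
               has_integral (2 * of_real pi * \<i> * F z) * (-\<i>)) {0..2*pi}" .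
  moreover have "F z = h z"
  proof -
    have "(norm z)\<^sup>2 < \<rho>\<^sup>2"
      using z by (simp add: power_strict_mono)
    then have "of_real (\<rho>\<^sup>2) - of_real ((norm z)\<^sup>2) \<noteq> (0::complex)"
      by (metis less_irrefl of_real_diff of_real_eq_0_iff eq_iff_diff_eq_0)
    moreover have "cnj z * z = of_real ((norm z)\<^sup>2)"
      by (metis complex_norm_square mult.commute)
    ultimately show ?thesis
      unfolding F_def by simp
  qed
  moreover have "F (of_real \<rho> * cis t) / (of_real \<rho> * cis t - z) * of_real \<rho> * \<i> * cis t * (-\<i>)
                   = h (of_real \<rho> * cis t) * of_real (poisson_kernel \<rho> z t)" for t
  proof -
    define u where "u = of_real \<rho> * cis t"
    have "norm u = \<rho>"
      using \<open>0 < \<rho>\<close> by (simp add: u_def norm_mult)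
    have "F u / (u - z) * of_real \<rho> * \<i> * cis t * (-\<i>) = h u * (u * of_real (\<rho>\<^sup>2 - (norm z)\<^sup>2)
            / ((u - z) * (of_real (\<rho>\<^sup>2) - cnj z * u)))"
      by (simp add: F_def u_def mult_ac)
    then show ?thesis
      unfolding poisson_kernel_cauchy_eq[OF \<open>norm u = \<rho>\<close> z] by (simp add: u_def poisson_kernel_def)
  qed
  ultimately show ?thesis
    by (simp add: algebra_simps)
qed

lemma poisson_kernel_has_integral:
  assumes "0 < \<rho>" and "norm z < \<rho>"
  shows "(poisson_kernel \<rho> z has_integral 2 * pi) {0..2*pi}"
proof -
  have "((\<lambda>t. (\<lambda>_. 1) (of_real \<rho> * cis t) * complex_of_real (poisson_kernel \<rho> z t))
          has_integral (2 * pi * (\<lambda>_. 1::complex) z)) {0..2*pi}"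
    by (rule poisson_integral_formula[where R = "\<rho> + 1"]) (use assms in auto)
  from has_integral_linear[OF this bounded_linear_Re] show ?thesis
    by (simp add: o_def)
qed

lemma continuous_on_circle_comp:
  assumes "h holomorphic_on ball 0 R" and "0 \<le> \<rho>" and "\<rho> < R"
  shows "continuous_on A (\<lambda>t. h (of_real \<rho> * cis t))"
proof -
  have "(\<lambda>t. of_real \<rho> * cis t) ` A \<subseteq> ball 0 R"
    using assms by (auto simp: norm_mult)
  then show ?thesis
    by (intro continuous_on_compose2[OF holomorphic_on_imp_continuous_on[OF assms(1)]] continuous_intros)
qed

lemma norm_le_poisson_integral:
  assumes holh: "h holomorphic_on ball 0 R" and \<rho>: "0 < \<rho>" "\<rho> < R" and z: "norm z < \<rho>"
  shows "2 * pi * norm (h z) \<le> integral {0..2*pi} (\<lambda>t. norm (h (of_real \<rho> * cis t)) * poisson_kernel \<rho> z t)"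
proof -
  note formula = poisson_integral_formula[OF holh \<rho> z]
  have "2 * pi * norm (h z)
          = norm (integral {0..2*pi} (\<lambda>t. h (of_real \<rho> * cis t) * of_real (poisson_kernel \<rho> z t)))"
    using integral_unique[OF formula] by (simp add: norm_mult)
  also have "\<dots> \<le> integral {0..2*pi} (\<lambda>t. norm (h (of_real \<rho> * cis t)) * poisson_kernel \<rho> z t)"
    using formula z poisson_kernel_nonneg[of z \<rho>] \<rho>
    by (intro integral_norm_bound_integral integrable_continuous_interval continuous_intros
        continuous_on_circle_comp[OF holh] continuous_on_poisson_kernel) (auto simp: norm_mult)
  finally show ?thesis .
qed

lemma hardy_mean_has_integral:
  assumes "h holomorphic_on ball 0 1" and "0 \<le> \<rho>" and "\<rho> < 1" and "0 < p"
  shows "((\<lambda>t. norm (h (of_real \<rho> * cis t)) powr p) has_integral (2 * pi * hardy_mean p h \<rho>))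
           {0..2*pi}"
proof -
  have "continuous_on {0..2*pi} (\<lambda>t. norm (h (of_real \<rho> * cis t)) powr p)"
    by (intro continuous_on_powr' continuous_intros continuous_on_circle_comp) (use assms in auto)
  then show ?thesis
    using integrable_continuous_interval has_integral_integral by (fastforce simp: hardy_mean_def)
qed

lemma hardy_mean_nonneg: "0 \<le> hardy_mean p h r"
  unfolding hardy_mean_def
  by (cases "(\<lambda>t. norm (h (of_real r * cis t)) powr p) integrable_on {0..2*pi}")
     (auto intro!: divide_nonneg_pos integral_nonneg simp: not_integrable_integral)

lemma Hardy_norm_nonneg: "0 \<le> Hardy_norm p h"
  unfolding Hardy_norm_def by simp

lemma Sp_norm_nonneg: "0 \<le> Sp_norm p f"
  unfolding Sp_norm_def by (simp add: Hardy_norm_nonneg)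

lemma hardy_mean_le_Hardy_norm:
  assumes "in_Hardy p h" and "0 < p" and "r \<in> {0<..<1}"
  shows "hardy_mean p h r \<le> Hardy_norm p h powr p"
proof -
  have bdd: "bdd_above (hardy_mean p h ` {0<..<1})"
    using assms(1) by (simp add: in_Hardy_def)
  then have "0 \<le> (SUP r\<in>{0<..<1}. hardy_mean p h r)"
    using cSUP_upper2[OF bdd assms(3) hardy_mean_nonneg] by simp
  then have "Hardy_norm p h powr p = (SUP r\<in>{0<..<1}. hardy_mean p h r)"
    using \<open>0 < p\<close> by (simp add: Hardy_norm_def powr_powr)
  then show ?thesis
    using cSUP_upper[OF assms(3) bdd] by simp
qed

lemma in_Hardy_Hardy_norm_le:
  assumes "h holomorphic_on ball 0 1" and "0 < p" and "0 \<le> B"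
    and "\<And>r. r \<in> {0<..<1} \<Longrightarrow> hardy_mean p h r \<le> B powr p"
  shows "in_Hardy p h \<and> Hardy_norm p h \<le> B"
proof
  have bdd: "bdd_above (hardy_mean p h ` {0<..<1})"
    using assms(4) by (intro bdd_aboveI2) auto
  then show "in_Hardy p h"
    using assms(1) by (simp add: in_Hardy_def)
  have "Hardy_norm p h \<le> (B powr p) powr (1/p)"
    unfolding Hardy_norm_def using \<open>0 < p\<close>
    by (intro powr_mono2 cSUP_least) (auto intro!: cSUP_upper2[OF bdd, of "1/2"] hardy_mean_nonneg assms(4))
  also have "\<dots> = B"
    using assms(2,3) by (simp add: powr_powr)
  finally show "Hardy_norm p h \<le> B" .
qed

lemma in_Hardy_Hardy_norm_le_mult:
  assumes h1: "h1 holomorphic_on ball 0 1" and h2: "in_Hardy p h2" and "0 < p" and "0 \<le> c"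
    and le: "\<And>z. norm z < 1 \<Longrightarrow> norm (h1 z) \<le> c * norm (h2 z)"
  shows "in_Hardy p h1 \<and> Hardy_norm p h1 \<le> c * Hardy_norm p h2"
proof (rule in_Hardy_Hardy_norm_le[OF h1 \<open>0 < p\<close>])
  show "0 \<le> c * Hardy_norm p h2"
    using \<open>0 \<le> c\<close> by (simp add: Hardy_norm_nonneg)
  fix r :: real
  assume r: "r \<in> {0<..<1}"
  have hol2: "h2 holomorphic_on ball 0 1"
    using h2 by (simp add: in_Hardy_def)
  have "2 * pi * hardy_mean p h1 r \<le> c powr p * (2 * pi * hardy_mean p h2 r)"
  proof (rule has_integral_le[OF hardy_mean_has_integral[OF h1]
                                 has_integral_mult_right[OF hardy_mean_has_integral[OF hol2]]])
    fix t
    have "norm (h1 (of_real r * cis t)) powr p \<le> (c * norm (h2 (of_real r * cis t))) powr p"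
      using le[of "of_real r * cis t"] r \<open>0 < p\<close> by (intro powr_mono2) (auto simp: norm_mult)
    then show "norm (h1 (of_real r * cis t)) powr p \<le> c powr p * norm (h2 (of_real r * cis t)) powr p"
      using \<open>0 \<le> c\<close> by (simp add: powr_mult)
  qed (use r \<open>0 < p\<close> in auto)
  also have "\<dots> \<le> c powr p * (2 * pi * Hardy_norm p h2 powr p)"
    using hardy_mean_le_Hardy_norm[OF h2 \<open>0 < p\<close> r] by (intro mult_left_mono) auto
  finally show "hardy_mean p h1 r \<le> (c * Hardy_norm p h2) powr p"
    using \<open>0 \<le> c\<close> by (simp add: powr_mult Hardy_norm_nonneg)
qed

section \<open>Pointwise growth of \<open>H\<^sup>p\<close> functions\<close>

lemma le_add_powr_Young:
  fixes x l p :: real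
  assumes "0 \<le> x" and "0 < l" and "1 \<le> p"
  shows "x \<le> l + l powr (1 - p) * x powr p"
proof (cases "x \<le> l")
  case True
  then show ?thesis
    by (simp add: add_increasing2)
next
  case False
  then have "l powr (p - 1) \<le> x powr (p - 1)"
    using assms by (intro powr_mono2) auto
  then have "x * l powr (p - 1) \<le> x * x powr (p - 1)"
    using assms by (simp add: mult_left_mono)
  also have "\<dots> = x powr p"
    using False assms by (simp add: powr_diff)
  finally have "l powr (1 - p) * (x * l powr (p - 1)) \<le> l powr (1 - p) * x powr p"
    by (simp add: mult_left_mono)
  moreover have "l powr (1 - p) * (x * l powr (p - 1)) = x"
    using assms by (simp add: powr_add[symmetric])
  ultimately show ?thesis
    using assms by (simp add: add_increasing)
qed

text \<open>Choosing \<open>l = Q powr (1/p)\<close> optimises the family of bounds.\<close>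
lemma le_twice_powr_if_le_Young_bounds:
  fixes x p Q :: real
  assumes "1 \<le> p" and "0 \<le> Q" and bound: "\<And>l. 0 < l \<Longrightarrow> x \<le> l + l powr (1 - p) * Q"
  shows "x \<le> 2 * Q powr (1/p)"
proof (cases "Q = 0")
  case True
  then have "x \<le> e" if "0 < e" for e
    using bound[OF that] by simp
  then show ?thesis
    using True by (metis dense not_le powr_0 mult_zero_right)
next
  case False
  then have "0 < Q"
    using \<open>0 \<le> Q\<close> by simp
  have "(Q powr (1/p)) powr (1 - p) * Q = Q powr ((1/p) * (1 - p) + 1)"
    using \<open>0 < Q\<close> by (simp add: powr_powr powr_add)
  also have "(1/p) * (1 - p) + 1 = 1/p"
    using \<open>1 \<le> p\<close> by (simp add: field_simps)
  finally show ?thesis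
    using bound[of "Q powr (1/p)"] \<open>0 < Q\<close> by simp
qed

lemma Hardy_Young_bound:
  assumes h: "in_Hardy p h" and p: "1 \<le> p" and z: "norm z < 1" and l: "0 < l"
  shows "norm (h z) \<le> l + l powr (1 - p) * (4 / (1 - norm z) * Hardy_norm p h powr p)"
proof -
  have holh: "h holomorphic_on ball 0 1"
    using h by (simp add: in_Hardy_def)
  define \<rho> where "\<rho> = (1 + norm z) / 2"
  have \<rho>: "0 < \<rho>" "\<rho> < 1" "norm z < \<rho>"
    using z unfolding \<rho>_def by (auto intro: add_pos_nonneg)
  define P where "P = poisson_kernel \<rho> z"
  define Pm where "Pm = 4 / (1 - norm z)"
  define g where "g t = norm (h (of_real \<rho> * cis t))" for t
  have P_nonneg: "0 \<le> P t" and P_le: "P t \<le> Pm" for t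
    unfolding P_def Pm_def \<rho>_def using z by (auto intro: poisson_kernel_nonneg poisson_kernel_midpoint_le)
  have intgP: "(\<lambda>t. g t * P t) integrable_on {0..2*pi}"
    unfolding g_def P_def using \<rho>
    by (intro integrable_continuous_interval continuous_intros continuous_on_circle_comp[OF holh]
        continuous_on_poisson_kernel) auto
  have intB: "((\<lambda>t. l * P t + l powr (1 - p) * Pm * g t powr p) has_integral
                l * (2 * pi) + l powr (1 - p) * Pm * (2 * pi * hardy_mean p h \<rho>)) {0..2*pi}"
    unfolding P_def g_def using \<rho> p
    by (intro has_integral_add has_integral_mult_right poisson_kernel_has_integral
        hardy_mean_has_integral[OF holh]) auto
  have "2 * pi * norm (h z) \<le> integral {0..2*pi} (\<lambda>t. g t * P t)"
    unfolding g_def P_def using \<rho> by (intro norm_le_poisson_integral[OF holh]) auto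
  also have "\<dots> \<le> integral {0..2*pi} (\<lambda>t. l * P t + l powr (1 - p) * Pm * g t powr p)"
  proof (rule integral_le[OF intgP has_integral_integrable[OF intB]])
    fix t
    have "g t * P t \<le> (l + l powr (1 - p) * g t powr p) * P t"
      using le_add_powr_Young[of "g t" l p] l p P_nonneg[of t] by (intro mult_right_mono) (auto simp: g_def)
    also have "\<dots> \<le> l * P t + l powr (1 - p) * Pm * g t powr p"
      using P_le[of t] by (simp add: algebra_simps mult_right_mono)
    finally show "g t * P t \<le> l * P t + l powr (1 - p) * Pm * g t powr p" .
  qed
  also have "\<dots> = 2 * pi * (l + l powr (1 - p) * (Pm * hardy_mean p h \<rho>))"
    using integral_unique[OF intB] by (simp add: algebra_simps)
  also have "\<dots> \<le> 2 * pi * (l + l powr (1 - p) * (Pm * Hardy_norm p h powr p))"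
    using hardy_mean_le_Hardy_norm[OF h, of \<rho>] \<rho> p z
    by (intro mult_left_mono add_left_mono) (auto simp: Pm_def)
  finally show ?thesis
    by (simp add: Pm_def)
qed

lemma Hardy_pointwise_bound:
  assumes "in_Hardy p h" and "1 \<le> p" and "norm z < 1"
  shows "norm (h z) \<le> 2 * (4 / (1 - norm z)) powr (1/p) * Hardy_norm p h"
proof -
  have "norm (h z) \<le> 2 * (4 / (1 - norm z) * Hardy_norm p h powr p) powr (1/p)"
    using Hardy_Young_bound[OF assms] assms(2,3)
    by (intro le_twice_powr_if_le_Young_bounds) auto
  also have "\<dots> = 2 * (4 / (1 - norm z)) powr (1/p) * (Hardy_norm p h powr p) powr (1/p)"
    using assms(3) by (subst powr_mult) auto
  also have "\<dots> = 2 * (4 / (1 - norm z)) powr (1/p) * Hardy_norm p h"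
    using assms(2) by (simp add: powr_powr Hardy_norm_nonneg)
  finally show ?thesis .
qed

lemma Hardy_bound_on_cball:
  assumes "in_Hardy p h" and "1 \<le> p" and "norm z \<le> s" and "s < 1"
  shows "norm (h z) \<le> 2 * (4 / (1 - s)) powr (1/p) * Hardy_norm p h"
proof -
  have "(4 / (1 - norm z)) powr (1/p) \<le> (4 / (1 - s)) powr (1/p)"
    using assms by (intro powr_mono2 divide_left_mono) auto
  then show ?thesis
    using Hardy_pointwise_bound[OF assms(1,2), of z] assms
    by (smt (verit) Hardy_norm_nonneg mult_right_mono)
qed

lemma Hardy_deriv_bound_on_cball:
  assumes h: "in_Hardy p h" and p: "1 \<le> p" and w: "norm w \<le> s" and s: "s < 1"
  shows "norm (deriv h w) \<le> 4 / (1 - s) * (8 / (1 - s)) powr (1/p) * Hardy_norm p h"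
proof -
  define r where "r = (1 - s) / 2"
  define A where "A = 2 * (8 / (1 - s)) powr (1/p) * Hardy_norm p h"
  have r: "0 < r"
    using s by (simp add: r_def)
  have near: "norm \<zeta> \<le> (1 + s) / 2" if "\<zeta> \<in> cball w r" for \<zeta>
    using that w norm_triangle_ineq2[of \<zeta> w] by (auto simp: r_def dist_norm norm_minus_commute)
  have sub: "cball w r \<subseteq> ball 0 1"
  proof
    fix \<zeta>
    assume "\<zeta> \<in> cball w r"
    with near s show "\<zeta> \<in> ball 0 1"
      by fastforce
  qed
  have bound: "norm (h \<zeta>) \<le> A" if "\<zeta> \<in> cball w r" for \<zeta>
  proof -
    have "norm (h \<zeta>) \<le> 2 * (4 / (1 - (1 + s) / 2)) powr (1/p) * Hardy_norm p h"
      using Hardy_bound_on_cball[OF h p near[OF that]] s by simp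
    also have "4 / (1 - (1 + s) / 2) = 8 / (1 - s)"
      using s by (simp add: field_simps)
    finally show ?thesis
      by (simp add: A_def)
  qed
  have holh: "h holomorphic_on cball w r"
    using h sub by (auto simp: in_Hardy_def intro: holomorphic_on_subset)
  have key: "norm (deriv h w) \<le> (A + e) / r" if "0 < e" for e
  proof -
    have "norm ((deriv ^^ 1) h w) \<le> fact 1 * (A + e) / r ^ 1"
    proof (rule Cauchy_higher_deriv_bound[where y = 0])
      show "h holomorphic_on ball w r"
        using holh ball_subset_cball by (rule holomorphic_on_subset)
      show "continuous_on (cball w r) h"
        using holh by (rule holomorphic_on_imp_continuous_on)
      show "h \<zeta> \<in> ball 0 (A + e)" if "\<zeta> \<in> ball w r" for \<zeta>
        using bound[of \<zeta>] that \<open>0 < e\<close> by auto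
    qed (use r in auto)
    then show ?thesis
      by simp
  qed
  have "norm (deriv h w) \<le> A / r"
  proof (rule field_le_epsilon)
    fix e :: real
    assume "0 < e"
    with key[of "e * r"] r show "norm (deriv h w) \<le> A / r + e"
      by (simp add: add_divide_distrib)
  qed
  then show ?thesis
    using s by (simp add: A_def r_def)
qed

section \<open>Sufficiency\<close>

lemma comp_diff_Sp_norm_le:
  assumes p: "1 \<le> p" and hol\<phi>: "\<phi> holomorphic_on ball 0 1" and d\<phi>: "in_Hardy p (deriv \<phi>)"
    and \<phi>s: "\<And>z. norm z < 1 \<Longrightarrow> norm (\<phi> z) \<le> s" and s: "s < 1" and f: "in_Sp p f"
  shows "in_Sp p (comp_diff \<phi> f) \<and>
         Sp_norm p (comp_diff \<phi> f)
           \<le> (2 * (4 / (1 - s)) powr (1/p) + 4 / (1 - s) * (8 / (1 - s)) powr (1/p) * Hardy_norm p (deriv \<phi>))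
               * Sp_norm p f"
proof -
  define A where "A = 2 * (4 / (1 - s)) powr (1/p)"
  define L where "L = 4 / (1 - s) * (8 / (1 - s)) powr (1/p)"
  define h where "h = deriv f"
  define g where "g = comp_diff \<phi> f"
  have h: "in_Hardy p h" and holh: "h holomorphic_on ball 0 1"
    using f by (auto simp: in_Sp_def in_Hardy_def h_def)
  have g_eq: "g = h \<circ> \<phi>"
    by (simp add: g_def comp_diff_def h_def)
  have maps: "\<phi> ` ball 0 1 \<subseteq> ball 0 1"
    using \<phi>s s by fastforce
  have holg: "g holomorphic_on ball 0 1"
    unfolding g_eq using hol\<phi> holh maps by (rule holomorphic_on_compose_gen)
  have deriv_g: "deriv g z = deriv h (\<phi> z) * deriv \<phi> z" if "norm z < 1" for z
    unfolding g_eq using that \<phi>s[OF that] s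
    by (intro deriv_chain holomorphic_on_imp_differentiable_at[OF hol\<phi>]
        holomorphic_on_imp_differentiable_at[OF holh]) auto
  have "norm (deriv g z) \<le> L * Hardy_norm p h * norm (deriv \<phi> z)" if "norm z < 1" for z
    using Hardy_deriv_bound_on_cball[OF h p \<phi>s[OF that] s]
    unfolding deriv_g[OF that] norm_mult L_def by (intro mult_right_mono) auto
  then have dg: "in_Hardy p (deriv g) \<and> Hardy_norm p (deriv g) \<le> L * Hardy_norm p h * Hardy_norm p (deriv \<phi>)"
    using holomorphic_deriv[OF holg] d\<phi> p s
    by (intro in_Hardy_Hardy_norm_le_mult) (auto simp: L_def Hardy_norm_nonneg)
  have "norm (g 0) \<le> A * Hardy_norm p h"
    using Hardy_bound_on_cball[OF h p \<phi>s s, of 0] by (simp add: g_eq A_def)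
  with dg have "Sp_norm p g \<le> (A + L * Hardy_norm p (deriv \<phi>)) * Hardy_norm p h"
    by (simp add: Sp_norm_def algebra_simps)
  also have "\<dots> \<le> (A + L * Hardy_norm p (deriv \<phi>)) * Sp_norm p f"
    using s by (intro mult_left_mono) (auto simp: Sp_norm_def h_def A_def L_def Hardy_norm_nonneg)
  finally show ?thesis
    using holg dg by (simp add: in_Sp_def g_def A_def L_def)
qed

lemma comp_diff_bounded_Sp_if_sup_less_1:
  assumes "1 \<le> p" and "\<phi> holomorphic_on ball 0 1" and "\<phi> ` ball 0 1 \<subseteq> ball 0 1"
    and "in_Sp p \<phi>" and "(SUP z\<in>ball 0 1. norm (\<phi> z)) < 1"
  shows "comp_diff_bounded_Sp p \<phi>"
proof -
  have "bdd_above ((\<lambda>z. norm (\<phi> z)) ` ball 0 1)"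
    using assms(3) by (intro bdd_aboveI[where M = 1]) auto
  then have "norm (\<phi> z) \<le> (SUP z\<in>ball 0 1. norm (\<phi> z))" if "norm z < 1" for z
    using that by (intro cSUP_upper) auto
  then show ?thesis
    using comp_diff_Sp_norm_le[OF assms(1,2)] assms(4,5)
    unfolding comp_diff_bounded_Sp_def in_Sp_def by blast
qed

section \<open>Point evaluations on \<open>S\<^sup>p\<close>\<close>

lemma has_vector_derivative_along_ray:
  assumes "(g has_field_derivative g') (at (of_real t * z))"
  shows "((\<lambda>t. g (of_real t * z)) has_vector_derivative g' * z) (at t)"
proof -
  have "((\<lambda>u. u * z) has_field_derivative z) (at (of_real t))"
    by (auto intro!: derivative_eq_intros)
  from DERIV_chain'[OF this assms] have "((\<lambda>u. g (u * z)) has_field_derivative g' * z) (at (of_real t))" .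
  from has_vector_derivative_real_field[OF this] show ?thesis
    by simp
qed

lemma has_real_derivative_powr_one_sub:
  fixes a x t :: real
  assumes "0 < a" and "0 < 1 - t * x"
  shows "((\<lambda>t. - (B / a) * (1 - t * x) powr a) has_real_derivative B * x * (1 - t * x) powr (a - 1)) (at t)"
proof -
  have "((\<lambda>t. - (B / a) * (1 - t * x) powr a) has_real_derivative
          - (B / a) * (a * (1 - t * x) powr (a - 1) * - x)) (at t)"
    using assms by (intro DERIV_cmult DERIV_fun_powr[where r = a, simplified]) (auto intro!: derivative_eq_intros)
  then show ?thesis
    using assms(1) by (simp add: mult_ac)
qed

text \<open>Integrate \<open>g'\<close> along the radius \<open>[0, z]\<close> and compare with the real primitive of the bound.\<close>
lemma norm_diff_le_if_deriv_growth:
  assumes holg: "g holomorphic_on ball 0 1" and a: "0 < a"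
    and growth: "\<And>\<zeta>. norm \<zeta> < 1 \<Longrightarrow> norm (deriv g \<zeta>) \<le> B * (1 - norm \<zeta>) powr (a - 1)"
    and z: "norm z < 1"
  shows "norm (g z - g 0) \<le> B / a"
proof -
  define x where "x = norm z"
  have x: "0 \<le> x" "x < 1"
    using z by (auto simp: x_def)
  have B: "0 \<le> B"
    using growth[of 0] by simp (meson norm_ge_zero order_trans)
  have seg: "norm (of_real t * z) < 1" "0 < 1 - t * x" if "0 \<le> t" "t \<le> 1" for t :: real
  proof -
    have "t * x \<le> x"
      using that x by (simp add: mult_left_le_one_le)
    then show "norm (of_real t * z) < 1" "0 < 1 - t * x"
      using that x by (auto simp: norm_mult x_def)
  qed
  define \<Phi> where "\<Phi> t = - (B / a) * (1 - t * x) powr a" for t :: real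
  have "norm (g (of_real 1 * z) - g (of_real 0 * z)) \<le> \<Phi> 1 - \<Phi> 0"
  proof (rule differentiable_bound_general[where f' = "\<lambda>t. deriv g (of_real t * z) * z"
                                             and \<phi>' = "\<lambda>t. B * x * (1 - t * x) powr (a - 1)"])
    have "(\<lambda>t::real. of_real t * z) ` {0..1} \<subseteq> ball 0 1"
      using seg by auto
    then show "continuous_on {0..1} (\<lambda>t. g (of_real t * z))"
      by (intro continuous_on_compose2[OF holomorphic_on_imp_continuous_on[OF holg]] continuous_intros)
    have "\<forall>t\<in>{0..1}. 0 < 1 - t * x"
      using seg(2) by auto
    then show "continuous_on {0..1} \<Phi>"
      unfolding \<Phi>_def by (intro continuous_intros continuous_on_powr') auto
    fix t :: real
    assume t: "0 < t" "t < 1"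
    show "((\<lambda>t. g (of_real t * z)) has_vector_derivative deriv g (of_real t * z) * z) (at t)"
      using seg t by (intro has_vector_derivative_along_ray holomorphic_derivI[OF holg]) auto
    show "(\<Phi> has_vector_derivative B * x * (1 - t * x) powr (a - 1)) (at t)"
      unfolding \<Phi>_def has_real_derivative_iff_has_vector_derivative[symmetric]
      using a seg t by (intro has_real_derivative_powr_one_sub) auto
    have "norm (deriv g (of_real t * z)) * x \<le> B * (1 - t * x) powr (a - 1) * x"
      using growth[of "of_real t * z"] seg t x by (intro mult_right_mono) (auto simp: norm_mult x_def)
    then show "norm (deriv g (of_real t * z) * z) \<le> B * x * (1 - t * x) powr (a - 1)"
      by (simp add: norm_mult x_def mult_ac)
  qed simp
  also have "\<Phi> 1 - \<Phi> 0 = (B / a) * (1 - (1 - x) powr a)"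
    by (simp add: \<Phi>_def algebra_simps)
  also have "\<dots> \<le> B / a"
    using B a x by (intro mult_left_le) auto
  finally show ?thesis
    by simp
qed

lemma Sp_pointwise_bound:
  assumes p: "1 < p" and g: "in_Sp p g" and z: "norm z < 1"
  shows "norm (g z) \<le> norm (g 0) + 2 * 4 powr (1/p) * (p / (p - 1)) * Hardy_norm p (deriv g)"
proof -
  define B where "B = 2 * 4 powr (1/p) * Hardy_norm p (deriv g)"
  have "norm (deriv g \<zeta>) \<le> B * (1 - norm \<zeta>) powr ((1 - 1/p) - 1)" if "norm \<zeta> < 1" for \<zeta>
  proof -
    have "(4 / (1 - norm \<zeta>)) powr (1/p) = 4 powr (1/p) * (1 - norm \<zeta>) powr ((1 - 1/p) - 1)"
      using that by (simp add: powr_divide powr_minus_divide)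
    then show ?thesis
      using Hardy_pointwise_bound[of p "deriv g" \<zeta>] g p that
      by (simp add: B_def in_Sp_def mult_ac)
  qed
  then have "norm (g z - g 0) \<le> B / (1 - 1/p)"
    using g p z by (intro norm_diff_le_if_deriv_growth) (auto simp: in_Sp_def)
  also have "B / (1 - 1/p) = 2 * 4 powr (1/p) * (p / (p - 1)) * Hardy_norm p (deriv g)"
    using p by (simp add: B_def field_simps)
  finally show ?thesis
    by (metis norm_triangle_sub order_trans add_left_mono)
qed

lemma Sp_pointwise_le_Sp_norm:
  assumes "1 < p" and "in_Sp p g" and "norm z < 1"
  shows "norm (g z) \<le> max 1 (2 * 4 powr (1/p) * (p / (p - 1))) * Sp_norm p g"
proof -
  define M where "M = max 1 (2 * 4 powr (1/p) * (p / (p - 1)))"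
  have "norm (g z) \<le> norm (g 0) + 2 * 4 powr (1/p) * (p / (p - 1)) * Hardy_norm p (deriv g)"
    using assms by (rule Sp_pointwise_bound)
  also have "\<dots> \<le> M * norm (g 0) + M * Hardy_norm p (deriv g)"
    unfolding M_def by (intro add_mono mult_right_mono) (auto simp: Hardy_norm_nonneg mult_le_cancel_right1)
  finally show ?thesis
    by (simp add: M_def Sp_norm_def algebra_simps)
qed

section \<open>Test functions\<close>

text \<open>Up to the factor \<open>1 - |w|\<^sup>2 r\<^sup>2\<close> the integrand is the Poisson kernel of the circle of radius \<open>r\<close>
  at the point \<open>w r\<^sup>2\<close>.\<close>
lemma has_integral_inverse_norm_square:
  assumes w: "norm w < 1" and r: "0 < r" "r < 1"
  shows "((\<lambda>t. 1 / (norm (1 - cnj w * (of_real r * cis t)))\<^sup>2) has_integral 2 * pi / (1 - (norm w)\<^sup>2 * r\<^sup>2))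
           {0..2*pi}"
proof -
  define z where "z = w * of_real (r\<^sup>2)"
  define c where "c = 1 - (norm w)\<^sup>2 * r\<^sup>2"
  have norm_z: "norm z = norm w * r\<^sup>2"
    by (simp add: z_def norm_mult del: of_real_power)
  have "norm w * r\<^sup>2 < 1 * r"
    using w r by (intro mult_strict_mono) (auto simp: power2_eq_square)
  then have z: "norm z < r"
    by (simp add: norm_z)
  have "(norm w)\<^sup>2 * r\<^sup>2 < 1 * 1"
    using w r by (intro mult_strict_mono) (auto simp: abs_square_less_1)
  then have c: "0 < c"
    by (simp add: c_def)
  have "1 / (norm (1 - cnj w * (of_real r * cis t)))\<^sup>2 = (1 / c) * poisson_kernel r z t" for t
  proof -
    define u where "u = 1 - cnj w * (of_real r * cis t)"
    have "cnj (cis t) * (cis t - w * of_real r) = cnj u"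
      by (simp add: u_def algebra_simps cis_cnj cis_mult)
    then have "norm (cis t - w * of_real r) = norm u"
      by (metis complex_mod_cnj norm_mult norm_cis mult_1)
    moreover have "of_real r * cis t - z = of_real r * (cis t - w * of_real r)"
      by (simp add: z_def algebra_simps power2_eq_square)
    ultimately have "norm (of_real r * cis t - z) = r * norm u"
      using r by (simp add: norm_mult)
    moreover have "u \<noteq> 0"
      using z r \<open>norm (of_real r * cis t - z) = r * norm u\<close> norm_sub_circle_ge[of r z t] by auto
    ultimately show ?thesis
      using r c by (simp add: poisson_kernel_def norm_z c_def u_def field_simps power2_eq_square)
  qed
  then show ?thesis
    using has_integral_mult_right[OF poisson_kernel_has_integral[OF r(1) z], of "1 / c"]
    by (simp add: c_def)
qed

text \<open>The principal branch of \<open>(1 - cnj w * \<zeta>) powr (-2/p)\<close>, well defined on the disc since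
  \<open>Re (1 - cnj w * \<zeta>) > 0\<close> there.\<close>
definition peak_kernel :: "real \<Rightarrow> complex \<Rightarrow> complex \<Rightarrow> complex" where
  "peak_kernel p w \<zeta> = exp (- (2/p) * Ln (1 - cnj w * \<zeta>))"

lemma Re_one_sub_cnj_mult_pos:
  assumes "norm w < 1" and "norm \<zeta> < 1"
  shows "0 < Re (1 - cnj w * \<zeta>)"
proof -
  have "norm w * norm \<zeta> < 1 * 1"
    using assms by (intro mult_strict_mono) auto
  then have "Re (cnj w * \<zeta>) < 1"
    using complex_Re_le_cmod[of "cnj w * \<zeta>"] by (simp add: norm_mult)
  then show ?thesis
    by simp
qed

lemma holomorphic_peak_kernel:
  assumes "norm w < 1"
  shows "peak_kernel p w holomorphic_on ball 0 1"
proof -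
  have "1 - cnj w * \<zeta> \<notin> \<real>\<^sub>\<le>\<^sub>0" if "\<zeta> \<in> ball 0 1" for \<zeta>
    using Re_one_sub_cnj_mult_pos[OF assms, of \<zeta>] that by (auto simp: complex_nonpos_Reals_iff)
  then show ?thesis
    unfolding peak_kernel_def by (intro holomorphic_intros) auto
qed

lemma norm_peak_kernel:
  assumes "norm w < 1" and "norm \<zeta> < 1"
  shows "norm (peak_kernel p w \<zeta>) = norm (1 - cnj w * \<zeta>) powr (-2/p)"
proof -
  have "1 - cnj w * \<zeta> \<noteq> 0"
    using Re_one_sub_cnj_mult_pos[OF assms] by (metis less_irrefl zero_complex.sel(1))
  then show ?thesis
    by (simp add: peak_kernel_def powr_def)
qed

lemma norm_peak_kernel_self:
  assumes "norm w < 1"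
  shows "norm (peak_kernel p w w) = (1 - (norm w)\<^sup>2) powr (-2/p)"
proof -
  have "1 - cnj w * w = of_real (1 - (norm w)\<^sup>2)"
    using complex_norm_square[of w] by (simp add: mult.commute)
  then have "norm (1 - cnj w * w) = 1 - (norm w)\<^sup>2"
    using assms by (simp only: norm_of_real) (simp add: abs_square_le_1)
  then show ?thesis
    using norm_peak_kernel[OF assms assms] by simp
qed

lemma hardy_mean_peak_kernel:
  assumes p: "0 < p" and w: "norm w < 1" and r: "0 < r" "r < 1"
  shows "hardy_mean p (peak_kernel p w) r = 1 / (1 - (norm w)\<^sup>2 * r\<^sup>2)"
proof -
  have "norm (peak_kernel p w (of_real r * cis t)) powr p = 1 / (norm (1 - cnj w * (of_real r * cis t)))\<^sup>2"
    for t
  proof -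
    define v where "v = norm (1 - cnj w * (of_real r * cis t))"
    have \<zeta>: "norm (of_real r * cis t) < 1"
      using r by (simp add: norm_mult)
    then have "0 < v"
      unfolding v_def using Re_one_sub_cnj_mult_pos[OF w] complex_Re_le_cmod less_le_trans by blast
    have "norm (peak_kernel p w (of_real r * cis t)) powr p = (v powr (-2/p)) powr p"
      using norm_peak_kernel[OF w \<zeta>] by (simp add: v_def)
    also have "\<dots> = 1 / v\<^sup>2"
      using p \<open>0 < v\<close> by (simp only: powr_powr) (simp add: powr_minus_divide powr_realpow)
    finally show ?thesis
      by (simp add: v_def)
  qed
  then show ?thesis
    using integral_unique[OF has_integral_inverse_norm_square[OF w r]] by (simp add: hardy_mean_def)
qed

lemma in_Hardy_peak_kernel:
  assumes p: "0 < p" and w: "norm w < 1"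
  shows "in_Hardy p (peak_kernel p w) \<and> Hardy_norm p (peak_kernel p w) \<le> (1 - (norm w)\<^sup>2) powr (-1/p)"
proof (rule in_Hardy_Hardy_norm_le[OF holomorphic_peak_kernel[OF w] p])
  fix r :: real
  assume r: "r \<in> {0<..<1}"
  have "(norm w)\<^sup>2 * r\<^sup>2 \<le> (norm w)\<^sup>2"
    using r by (simp add: mult_left_le power_le_one)
  moreover have "0 < 1 - (norm w)\<^sup>2"
    using w by (simp add: abs_square_less_1)
  ultimately have "hardy_mean p (peak_kernel p w) r \<le> 1 / (1 - (norm w)\<^sup>2)"
    using hardy_mean_peak_kernel[OF p w, of r] r by (auto intro!: divide_left_mono mult_pos_pos)
  also have "\<dots> = ((1 - (norm w)\<^sup>2) powr (-1/p)) powr p"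
    using p w by (simp only: powr_powr) (simp add: powr_minus_divide abs_square_less_1 abs_square_le_1)
  finally show "hardy_mean p (peak_kernel p w) r \<le> ((1 - (norm w)\<^sup>2) powr (-1/p)) powr p" .
qed simp

lemma holomorphic_primitive_ball:
  assumes "e holomorphic_on ball 0 1"
  obtains f where "f holomorphic_on ball 0 1" and "f 0 = 0" and "\<And>\<zeta>. norm \<zeta> < 1 \<Longrightarrow> deriv f \<zeta> = e \<zeta>"
proof -
  obtain F where F: "\<And>\<zeta>. \<zeta> \<in> ball 0 1 \<Longrightarrow> (F has_field_derivative e \<zeta>) (at \<zeta> within ball 0 1)"
    using holomorphic_convex_primitive'[OF convex_ball open_ball assms] by blast
  define f where "f \<zeta> = F \<zeta> - F 0" for \<zeta>
  have f_deriv: "(f has_field_derivative e \<zeta>) (at \<zeta>)" if "\<zeta> \<in> ball 0 1" for \<zeta>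
    using F[OF that] at_within_open[OF that open_ball] unfolding f_def by (auto intro!: derivative_eq_intros)
  show ?thesis
  proof
    show "f holomorphic_on ball 0 1"
      unfolding holomorphic_on_open[OF open_ball] using f_deriv by blast
    show "f 0 = 0"
      by (simp add: f_def)
    show "deriv f \<zeta> = e \<zeta>" if "norm \<zeta> < 1" for \<zeta>
      using f_deriv[of \<zeta>] that by (simp add: DERIV_imp_deriv)
  qed
qed

lemma Sp_test_function_exists:
  assumes p: "0 < p" and w: "norm w < 1"
  shows "\<exists>f. in_Sp p f \<and> Sp_norm p f \<le> (1 - (norm w)\<^sup>2) powr (-1/p)
             \<and> norm (deriv f w) = (1 - (norm w)\<^sup>2) powr (-2/p)"
proof -
  obtain f where holf: "f holomorphic_on ball 0 1" and "f 0 = 0"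
    and deriv_f: "\<And>\<zeta>. norm \<zeta> < 1 \<Longrightarrow> deriv f \<zeta> = peak_kernel p w \<zeta>"
    using holomorphic_primitive_ball[OF holomorphic_peak_kernel[OF w]] by blast
  have "in_Hardy p (deriv f) \<and> Hardy_norm p (deriv f) \<le> 1 * Hardy_norm p (peak_kernel p w)"
    using holomorphic_deriv[OF holf] in_Hardy_peak_kernel[OF p w] p deriv_f
    by (intro in_Hardy_Hardy_norm_le_mult) auto
  then show ?thesis
    using holf \<open>f 0 = 0\<close> in_Hardy_peak_kernel[OF p w] norm_peak_kernel_self[OF w] deriv_f[OF w]
    by (intro exI[of _ f]) (auto simp: in_Sp_def Sp_norm_def)
qed

section \<open>Necessity\<close>

lemma SUP_norm_less_1_if_powr_bounded:
  assumes p: "0 < p" and maps: "\<phi> ` ball 0 1 \<subseteq> ball 0 1"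
    and bounded: "\<And>z. norm z < 1 \<Longrightarrow> (1 - (norm (\<phi> z))\<^sup>2) powr (-1/p) \<le> K"
  shows "(SUP z\<in>ball 0 1. norm (\<phi> z)) < 1"
proof -
  have u: "0 < 1 - (norm (\<phi> z))\<^sup>2" if "norm z < 1" for z
    using maps that by (auto simp: image_subset_iff abs_square_less_1)
  have K: "0 < K"
    using bounded[of 0] u[of 0] by (smt (verit) norm_zero powr_gt_zero)
  have "(norm (\<phi> z))\<^sup>2 \<le> 1 - K powr (-p)" if "norm z < 1" for z
  proof -
    have "K powr (-p) \<le> ((1 - (norm (\<phi> z))\<^sup>2) powr (-1/p)) powr (-p)"
      using bounded[OF that] u[OF that] p by (intro powr_mono2') auto
    also have "\<dots> = 1 - (norm (\<phi> z))\<^sup>2"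
      using p u[OF that] by (simp add: powr_powr)
    finally show ?thesis
      by simp
  qed
  then have "(SUP z\<in>ball 0 1. norm (\<phi> z)) \<le> sqrt (1 - K powr (-p))"
    by (intro cSUP_least) (auto simp: real_le_rsqrt)
  also have "\<dots> < 1"
    using K by simp
  finally show ?thesis .
qed

lemma sup_less_1_if_comp_diff_bounded_Sp:
  assumes p: "1 < p" and maps: "\<phi> ` ball 0 1 \<subseteq> ball 0 1" and bounded: "comp_diff_bounded_Sp p \<phi>"
  shows "(SUP z\<in>ball 0 1. norm (\<phi> z)) < 1"
proof -
  obtain C where inS: "\<And>f. in_Sp p f \<Longrightarrow> in_Sp p (comp_diff \<phi> f)"
    and C: "\<And>f. in_Sp p f \<Longrightarrow> Sp_norm p (comp_diff \<phi> f) \<le> C * Sp_norm p f"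
    using bounded unfolding comp_diff_bounded_Sp_def by blast
  define M where "M = max 1 (2 * 4 powr (1/p) * (p / (p - 1)))"
  define K where "K = M * max C 1"
  have key: "(1 - (norm (\<phi> z))\<^sup>2) powr (-1/p) \<le> K" if z: "norm z < 1" for z
  proof -
    define u where "u = 1 - (norm (\<phi> z))\<^sup>2"
    have "norm (\<phi> z) < 1"
      using maps z by (auto simp: image_subset_iff)
    then have u: "0 < u"
      by (simp add: u_def abs_square_less_1)
    obtain f where f: "in_Sp p f" and f_norm: "Sp_norm p f \<le> u powr (-1/p)"
      and f_peak: "norm (deriv f (\<phi> z)) = u powr (-2/p)"
      using Sp_test_function_exists[of p "\<phi> z"] p \<open>norm (\<phi> z) < 1\<close> unfolding u_def by auto
    have "u powr (-1/p) * u powr (-1/p) = norm (comp_diff \<phi> f z)"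
      using f_peak u by (simp add: comp_diff_def flip: powr_add)
    also have "\<dots> \<le> M * Sp_norm p (comp_diff \<phi> f)"
      unfolding M_def using p inS[OF f] z by (rule Sp_pointwise_le_Sp_norm)
    also have "\<dots> \<le> M * (max C 1 * Sp_norm p f)"
      using C[OF f] mult_right_mono[OF max.cobounded1 Sp_norm_nonneg[of p f], of C 1]
      by (intro mult_left_mono) (auto simp: M_def)
    also have "\<dots> \<le> K * u powr (-1/p)"
      unfolding K_def mult.assoc using f_norm by (intro mult_left_mono) (auto simp: M_def)
    finally show ?thesis
      using u by (simp add: u_def)
  qed
  then show ?thesis
    using p maps by (intro SUP_norm_less_1_if_powr_bounded) auto
qed

theorem theorem3p3:
  fixes p :: real and \<phi> :: "complex \<Rightarrow> complex"
  assumes "p > 1"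
    and "\<phi> holomorphic_on ball 0 1"
    and "\<phi> ` ball 0 1 \<subseteq> ball 0 1"
    and "in_Sp p \<phi>"
  shows "comp_diff_bounded_Sp p \<phi> \<longleftrightarrow> (SUP z\<in>ball 0 1. norm (\<phi> z)) < 1"
  using sup_less_1_if_comp_diff_bounded_Sp[OF assms(1,3)] comp_diff_bounded_Sp_if_sup_less_1[OF _ assms(2-4)] assms(1)
  by fastforce

end
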